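(* Let $R$ be a ring, $G$ a group and $A$ an $RG$-module. Then $\mathbf{Coc}_{R\text{-mmx}}(G) = \{x \in G \mid A/C_A(x) \text{ is a minimax } R\text{-module}\}$ is a normal subgroup of $G$.
   Context: An $R$-module is minimax if it has a finite series of submodules whose factors are each noetherian or artinian. For $x \in G$, $C_A(x) = \{a\in A \mid ax = a\}$. *)

theory Defs
  imports "HOL-Algebra.Algebra"
begin

text \<open>Left R-module over an arbitrary (not necessarily commutative) ring R.
  The library locale module requires a commutative ring, so we use its axioms
  together with ring R.\<close>
definition rmodule :: "('r, 'c) ring_scheme \<Rightarrow> ('r, 'm, 'd) module_scheme \<Rightarrow> bool" where
  "rmodule R M \<longleftrightarrow> ring R \<and> abelian_group M \<and> module_axioms R M"

definition quot_module :: "('r, 'm, 'd) module_scheme \<Rightarrow> 'm set \<Rightarrow> ('r, 'm set) module" where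
  "quot_module M N =
     \<lparr> carrier = a_rcosets\<^bsub>M\<^esub> N,
       monoid.mult = (\<lambda>_ _. N), one = N,
       ring.zero = N,
       ring.add = (\<lambda>U V. U <+>\<^bsub>M\<^esub> V),
       module.smult = (\<lambda>r U. N <+>\<^bsub>M\<^esub> ((\<lambda>u. r \<odot>\<^bsub>M\<^esub> u) ` U)) \<rparr>"

definition noetherian_module :: "('r, 'c) ring_scheme \<Rightarrow> ('r, 'm, 'd) module_scheme \<Rightarrow> bool" where
  "noetherian_module R M \<longleftrightarrow>
     (\<forall>f :: nat \<Rightarrow> 'm set. (\<forall>n. submodule (f n) R M \<and> f n \<subseteq> f (Suc n))
        \<longrightarrow> (\<exists>m. \<forall>n\<ge>m. f n = f m))"

definition artinian_module :: "('r, 'c) ring_scheme \<Rightarrow> ('r, 'm, 'd) module_scheme \<Rightarrow> bool" where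
  "artinian_module R M \<longleftrightarrow>
     (\<forall>f :: nat \<Rightarrow> 'm set. (\<forall>n. submodule (f n) R M \<and> f (Suc n) \<subseteq> f n)
        \<longrightarrow> (\<exists>m. \<forall>n\<ge>m. f n = f m))"

definition minimax_module :: "('r, 'c) ring_scheme \<Rightarrow> ('r, 'm, 'd) module_scheme \<Rightarrow> bool" where
  "minimax_module R M \<longleftrightarrow>
     (\<exists>(n::nat) (S :: nat \<Rightarrow> 'm set).
        S 0 = {\<zero>\<^bsub>M\<^esub>} \<and> S n = carrier M \<and>
        (\<forall>i\<le>n. submodule (S i) R M) \<and>
        (\<forall>i<n. S i \<subseteq> S (Suc i) \<and>
           (noetherian_module R (quot_module (M\<lparr>carrier := S (Suc i)\<rparr>) (S i)) \<or>
            artinian_module R (quot_module (M\<lparr>carrier := S (Suc i)\<rparr>) (S i)))))"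

definition RG_module :: "('r, 'c) ring_scheme \<Rightarrow> ('g, 'e) monoid_scheme \<Rightarrow>
    ('r, 'm, 'd) module_scheme \<Rightarrow> ('m \<Rightarrow> 'g \<Rightarrow> 'm) \<Rightarrow> bool" where
  "RG_module R G A act \<longleftrightarrow> rmodule R A \<and> group G \<and>
     (\<forall>x\<in>carrier G. \<forall>a\<in>carrier A. act a x \<in> carrier A) \<and>
     (\<forall>x\<in>carrier G. \<forall>a\<in>carrier A. \<forall>b\<in>carrier A. act (a \<oplus>\<^bsub>A\<^esub> b) x = act a x \<oplus>\<^bsub>A\<^esub> act b x) \<and>
     (\<forall>x\<in>carrier G. \<forall>r\<in>carrier R. \<forall>a\<in>carrier A. act (r \<odot>\<^bsub>A\<^esub> a) x = r \<odot>\<^bsub>A\<^esub> act a x) \<and>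
     (\<forall>a\<in>carrier A. act a \<one>\<^bsub>G\<^esub> = a) \<and>
     (\<forall>x\<in>carrier G. \<forall>y\<in>carrier G. \<forall>a\<in>carrier A. act (act a x) y = act a (x \<otimes>\<^bsub>G\<^esub> y))"

definition centr_mod :: "('r, 'm, 'd) module_scheme \<Rightarrow> ('m \<Rightarrow> 'g \<Rightarrow> 'm) \<Rightarrow> 'g \<Rightarrow> 'm set" where
  "centr_mod A act x = {a \<in> carrier A. act a x = a}"

definition Coc_mmx :: "('r, 'c) ring_scheme \<Rightarrow> ('g, 'e) monoid_scheme \<Rightarrow>
    ('r, 'm, 'd) module_scheme \<Rightarrow> ('m \<Rightarrow> 'g \<Rightarrow> 'm) \<Rightarrow> 'g set" where
  "Coc_mmx R G A act = {x \<in> carrier G. minimax_module R (quot_module A (centr_mod A act x))}"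

end

theory Submission
  imports Defs
begin

text \<open>
  The centralizer \<open>C\<^sub>A(x)\<close> is the submodule of fixed points of the \<open>R\<close>-linear map
  \<open>a \<mapsto> a x\<close>. By the correspondence theorem, \<open>A/C\<close> is minimax iff there is a finite chain
  of submodules \<open>C = T\<^sub>0 \<subseteq> \<dots> \<subseteq> T\<^sub>n = A\<close> such that the submodules between consecutive
  terms satisfy ACC or DCC. Such submodules \<open>C\<close> are closed under enlargement (add \<open>D \<supseteq> C\<close>
  to every term; the modular law embeds the new intervals into the old ones), under finite
  intersections (intersect the chain of \<open>C\<^sub>1\<close> with \<open>C\<^sub>2\<close>, then continue with the chain of
  \<open>C\<^sub>2\<close>) and under automorphisms of \<open>A\<close>. Together with \<open>C\<^sub>A(1) = A\<close>,
  \<open>C\<^sub>A(x) \<inter> C\<^sub>A(y) \<subseteq> C\<^sub>A(xy)\<close>, \<open>C\<^sub>A(x) \<subseteq> C\<^sub>A(x\<^sup>-\<^sup>1)\<close> and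
  \<open>C\<^sub>A(h) g\<^sup>-\<^sup>1 \<subseteq> C\<^sub>A(g h g\<^sup>-\<^sup>1)\<close> this makes \<open>Coc\<close> a normal subgroup.
\<close>

section \<open>Chain conditions\<close>

definition acc :: "('a set \<Rightarrow> bool) \<Rightarrow> bool" where
  "acc P \<longleftrightarrow> (\<forall>f::nat \<Rightarrow> 'a set. (\<forall>n. P (f n) \<and> f n \<subseteq> f (Suc n)) \<longrightarrow> (\<exists>m. \<forall>n\<ge>m. f n = f m))"

definition dcc :: "('a set \<Rightarrow> bool) \<Rightarrow> bool" where
  "dcc P \<longleftrightarrow> (\<forall>f::nat \<Rightarrow> 'a set. (\<forall>n. P (f n) \<and> f (Suc n) \<subseteq> f n) \<longrightarrow> (\<exists>m. \<forall>n\<ge>m. f n = f m))"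

lemma noetherian_module_iff_acc: "noetherian_module R M \<longleftrightarrow> acc (\<lambda>H. submodule H R M)"
  unfolding noetherian_module_def acc_def by simp

lemma artinian_module_iff_dcc: "artinian_module R M \<longleftrightarrow> dcc (\<lambda>H. submodule H R M)"
  unfolding artinian_module_def dcc_def by simp

lemma dcc_iff_acc_Compl: "dcc P \<longleftrightarrow> acc (\<lambda>H. P (- H))"
  unfolding dcc_def acc_def
proof (intro iffI allI impI)
  fix f :: "nat \<Rightarrow> 'a set"
  assume dcc: "\<forall>f. (\<forall>n. P (f n) \<and> f (Suc n) \<subseteq> f n) \<longrightarrow> (\<exists>m. \<forall>n\<ge>m. f n = f m)"
    and f: "\<forall>n. P (- f n) \<and> f n \<subseteq> f (Suc n)"
  have "\<forall>n. P (- f n) \<and> - f (Suc n) \<subseteq> - f n" using f by simp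
  then obtain m where "\<forall>n\<ge>m. - f n = - f m" using dcc[THEN spec, of "\<lambda>n. - f n"] by blast
  then show "\<exists>m. \<forall>n\<ge>m. f n = f m" by (auto simp: compl_eq_compl_iff)
next
  fix f :: "nat \<Rightarrow> 'a set"
  assume acc: "\<forall>f. (\<forall>n. P (- f n) \<and> f n \<subseteq> f (Suc n)) \<longrightarrow> (\<exists>m. \<forall>n\<ge>m. f n = f m)"
    and f: "\<forall>n. P (f n) \<and> f (Suc n) \<subseteq> f n"
  have "\<forall>n. P (- (- f n)) \<and> - f n \<subseteq> - f (Suc n)" using f by simp
  then obtain m where "\<forall>n\<ge>m. - f n = - f m" using acc[THEN spec, of "\<lambda>n. - f n"] by blast
  then show "\<exists>m. \<forall>n\<ge>m. f n = f m" by (auto simp: compl_eq_compl_iff)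
qed

lemma acc_embedding:
  assumes "acc Q" and into: "\<And>H. P H \<Longrightarrow> Q (g H)"
    and mono: "\<And>H K. P H \<Longrightarrow> P K \<Longrightarrow> H \<subseteq> K \<Longrightarrow> g H \<subseteq> g K"
    and inj: "\<And>H K. P H \<Longrightarrow> P K \<Longrightarrow> g H = g K \<Longrightarrow> H = K"
  shows "acc P"
  unfolding acc_def
proof (intro allI impI)
  fix f :: "nat \<Rightarrow> _" assume f: "\<forall>n. P (f n) \<and> f n \<subseteq> f (Suc n)"
  then have "\<forall>n. Q (g (f n)) \<and> g (f n) \<subseteq> g (f (Suc n))"
    using into mono by simp
  then obtain m where m: "\<forall>n\<ge>m. g (f n) = g (f m)"
    using \<open>acc Q\<close>[unfolded acc_def, rule_format, of "\<lambda>n. g (f n)"] by blast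
  have "f n = f m" if "n \<ge> m" for n
  proof (rule inj)
    show "P (f n)" "P (f m)" using f by blast+
    show "g (f n) = g (f m)" using m that by blast
  qed
  then show "\<exists>m. \<forall>n\<ge>m. f n = f m" by blast
qed

lemma dcc_embedding:
  assumes "dcc Q" and into: "\<And>H. P H \<Longrightarrow> Q (g H)"
    and mono: "\<And>H K. P H \<Longrightarrow> P K \<Longrightarrow> H \<subseteq> K \<Longrightarrow> g H \<subseteq> g K"
    and inj: "\<And>H K. P H \<Longrightarrow> P K \<Longrightarrow> g H = g K \<Longrightarrow> H = K"
  shows "dcc P"
  using \<open>dcc Q\<close> unfolding dcc_iff_acc_Compl
proof (rule acc_embedding[where Q = "\<lambda>H. Q (- H)" and P = "\<lambda>H. P (- H)" and g = "\<lambda>H. - g (- H)"])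
  show "Q (- (- g (- H)))" if "P (- H)" for H
    using into that by simp
  show "- g (- H) \<subseteq> - g (- K)" if "P (- H)" "P (- K)" "H \<subseteq> K" for H K
    using mono[of "- K" "- H"] that by simp
  show "H = K" if "P (- H)" "P (- K)" "- g (- H) = - g (- K)" for H K
    using inj[of "- H" "- K"] that by (simp add: compl_eq_compl_iff)
qed

section \<open>Left modules over a ring\<close>

locale left_module = R: ring R + M: abelian_group M
  for R :: "('r, 'c) ring_scheme" and M :: "('r, 'm, 'd) module_scheme" +
  assumes smult_closed [simp, intro]:
      "\<lbrakk>a \<in> carrier R; x \<in> carrier M\<rbrakk> \<Longrightarrow> a \<odot>\<^bsub>M\<^esub> x \<in> carrier M"
    and smult_l_distr:
      "\<lbrakk>a \<in> carrier R; b \<in> carrier R; x \<in> carrier M\<rbrakk> \<Longrightarrow>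
      (a \<oplus>\<^bsub>R\<^esub> b) \<odot>\<^bsub>M\<^esub> x = a \<odot>\<^bsub>M\<^esub> x \<oplus>\<^bsub>M\<^esub> b \<odot>\<^bsub>M\<^esub> x"
    and smult_r_distr:
      "\<lbrakk>a \<in> carrier R; x \<in> carrier M; y \<in> carrier M\<rbrakk> \<Longrightarrow>
      a \<odot>\<^bsub>M\<^esub> (x \<oplus>\<^bsub>M\<^esub> y) = a \<odot>\<^bsub>M\<^esub> x \<oplus>\<^bsub>M\<^esub> a \<odot>\<^bsub>M\<^esub> y"
    and smult_assoc1:
      "\<lbrakk>a \<in> carrier R; b \<in> carrier R; x \<in> carrier M\<rbrakk> \<Longrightarrow>
      (a \<otimes>\<^bsub>R\<^esub> b) \<odot>\<^bsub>M\<^esub> x = a \<odot>\<^bsub>M\<^esub> (b \<odot>\<^bsub>M\<^esub> x)"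
    and smult_one [simp]:
      "x \<in> carrier M \<Longrightarrow> \<one>\<^bsub>R\<^esub> \<odot>\<^bsub>M\<^esub> x = x"

lemma rmodule_imp_left_module: "rmodule R M \<Longrightarrow> left_module R M"
  unfolding rmodule_def module_axioms_def left_module_def left_module_axioms_def by auto

lemma submodule_iff:
  "submodule H R M \<longleftrightarrow> H \<subseteq> carrier M \<and> \<zero>\<^bsub>M\<^esub> \<in> H \<and> (\<forall>a\<in>H. \<ominus>\<^bsub>M\<^esub> a \<in> H)
     \<and> (\<forall>a\<in>H. \<forall>b\<in>H. a \<oplus>\<^bsub>M\<^esub> b \<in> H) \<and> (\<forall>r\<in>carrier R. \<forall>a\<in>H. r \<odot>\<^bsub>M\<^esub> a \<in> H)"
  unfolding submodule_def submodule_axioms_def subgroup_def a_inv_def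
  by auto

context left_module
begin

lemma submodule_abelian_subgroup: "submodule L R M \<Longrightarrow> abelian_subgroup L M"
  unfolding submodule_def
  by (intro abelian_subgroupI3 additive_subgroupI) (auto simp: M.abelian_group_axioms)

lemma restrict_left_module:
  assumes U: "submodule U R M"
  shows "left_module R (M\<lparr>carrier := U\<rparr>)"
    and "\<And>a. a \<in> U \<Longrightarrow> \<ominus>\<^bsub>M\<lparr>carrier := U\<rparr>\<^esub> a = \<ominus>\<^bsub>M\<^esub> a"
proof -
  have Us: "U \<subseteq> carrier M" "\<zero>\<^bsub>M\<^esub> \<in> U" "\<And>a. a\<in>U \<Longrightarrow> \<ominus>\<^bsub>M\<^esub> a \<in> U"
     "\<And>a b. a\<in>U \<Longrightarrow> b\<in>U \<Longrightarrow> a \<oplus>\<^bsub>M\<^esub> b \<in> U" "\<And>r a. r\<in>carrier R \<Longrightarrow> a\<in>U \<Longrightarrow> r \<odot>\<^bsub>M\<^esub> a \<in> U"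
    using U unfolding submodule_iff by auto
  have ag: "abelian_group (M\<lparr>carrier := U\<rparr>)"
  proof (rule abelian_groupI, goal_cases)
    case 1 then show ?case using Us(4) by simp
  next
    case 2 then show ?case using Us(2) by simp
  next
    case (3 x y z) then show ?case using Us(1) M.a_assoc[of x y z] by (simp add: subset_iff)
  next
    case (4 x y) then show ?case using Us(1) M.a_comm[of x y] by (simp add: subset_iff)
  next
    case (5 x) then show ?case using Us(1) M.l_zero[of x] by (simp add: subset_iff)
  next
    case 6 then show ?case using Us(1,3) by (intro bexI[of _ "\<ominus>\<^bsub>M\<^esub> _"]) (auto intro: M.l_neg)
  qed
  show "left_module R (M\<lparr>carrier := U\<rparr>)"
    unfolding left_module_def left_module_axioms_def
    using ag Us R.ring_axioms by (auto intro: smult_l_distr smult_r_distr smult_assoc1)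
  show "\<ominus>\<^bsub>M\<lparr>carrier := U\<rparr>\<^esub> a = \<ominus>\<^bsub>M\<^esub> a" if "a \<in> U" for a
    using abelian_group.minus_equality[OF ag, of "\<ominus>\<^bsub>M\<^esub> a" a] that Us
    by (auto intro: M.l_neg)
qed

lemma submodule_restrict_iff:
  assumes U: "submodule U R M"
  shows "submodule H R (M\<lparr>carrier := U\<rparr>) \<longleftrightarrow> submodule H R M \<and> H \<subseteq> U"
proof -
  have "U \<subseteq> carrier M" using U unfolding submodule_iff by auto
  moreover have "H \<subseteq> U \<Longrightarrow> \<forall>a\<in>H. \<ominus>\<^bsub>M\<lparr>carrier := U\<rparr>\<^esub> a = \<ominus>\<^bsub>M\<^esub> a"
    using restrict_left_module(2)[OF U] by blast
  ultimately show ?thesis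
    unfolding submodule_iff by auto
qed

end

definition module_endo :: "('r, 'c) ring_scheme \<Rightarrow> ('r, 'm, 'd) module_scheme \<Rightarrow> ('m \<Rightarrow> 'm) \<Rightarrow> bool" where
  "module_endo R M f \<longleftrightarrow> (\<forall>a\<in>carrier M. f a \<in> carrier M) \<and>
     (\<forall>a\<in>carrier M. \<forall>b\<in>carrier M. f (a \<oplus>\<^bsub>M\<^esub> b) = f a \<oplus>\<^bsub>M\<^esub> f b) \<and>
     (\<forall>r\<in>carrier R. \<forall>a\<in>carrier M. f (r \<odot>\<^bsub>M\<^esub> a) = r \<odot>\<^bsub>M\<^esub> f a)"

lemma set_add_mono: "H \<subseteq> H' \<Longrightarrow> K \<subseteq> K' \<Longrightarrow> H <+>\<^bsub>M\<^esub> K \<subseteq> H' <+>\<^bsub>M\<^esub> K'"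
  unfolding set_add_def' by blast

lemma mem_set_add_iff: "x \<in> H <+>\<^bsub>M\<^esub> K \<longleftrightarrow> (\<exists>h\<in>H. \<exists>k\<in>K. x = h \<oplus>\<^bsub>M\<^esub> k)"
  unfolding set_add_def' by blast

context left_module
begin

lemma smult_zero [simp]: "r \<in> carrier R \<Longrightarrow> r \<odot>\<^bsub>M\<^esub> \<zero>\<^bsub>M\<^esub> = \<zero>\<^bsub>M\<^esub>"
  using smult_r_distr[of r "\<zero>\<^bsub>M\<^esub>" "\<zero>\<^bsub>M\<^esub>"] by (simp add: M.add.l_cancel_one')

lemma submodule_zero: "submodule {\<zero>\<^bsub>M\<^esub>} R M"
  unfolding submodule_iff by simp

lemma submodule_carrier: "submodule (carrier M) R M"
  unfolding submodule_iff by simp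

lemma submodule_Int: "submodule H R M \<Longrightarrow> submodule K R M \<Longrightarrow> submodule (H \<inter> K) R M"
  unfolding submodule_iff by blast

lemma submodule_set_add:
  assumes H: "submodule H R M" and K: "submodule K R M"
  shows "submodule (H <+>\<^bsub>M\<^esub> K) R M"
proof -
  have h: "H \<subseteq> carrier M" "\<zero>\<^bsub>M\<^esub> \<in> H" "\<And>a. a\<in>H \<Longrightarrow> \<ominus>\<^bsub>M\<^esub> a \<in> H"
     "\<And>a b. a\<in>H \<Longrightarrow> b\<in>H \<Longrightarrow> a \<oplus>\<^bsub>M\<^esub> b \<in> H" "\<And>r a. r\<in>carrier R \<Longrightarrow> a\<in>H \<Longrightarrow> r \<odot>\<^bsub>M\<^esub> a \<in> H"
    using H unfolding submodule_iff by auto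
  have k: "K \<subseteq> carrier M" "\<zero>\<^bsub>M\<^esub> \<in> K" "\<And>a. a\<in>K \<Longrightarrow> \<ominus>\<^bsub>M\<^esub> a \<in> K"
     "\<And>a b. a\<in>K \<Longrightarrow> b\<in>K \<Longrightarrow> a \<oplus>\<^bsub>M\<^esub> b \<in> K" "\<And>r a. r\<in>carrier R \<Longrightarrow> a\<in>K \<Longrightarrow> r \<odot>\<^bsub>M\<^esub> a \<in> K"
    using K unfolding submodule_iff by auto
  show ?thesis
    unfolding submodule_iff mem_set_add_iff
  proof (intro conjI ballI)
    show "H <+>\<^bsub>M\<^esub> K \<subseteq> carrier M" using h(1) k(1) unfolding set_add_def' by blast
    show "\<exists>h\<in>H. \<exists>k\<in>K. \<zero>\<^bsub>M\<^esub> = h \<oplus>\<^bsub>M\<^esub> k" using h(2) k(2) by force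
  next
    fix a assume "a \<in> H <+>\<^bsub>M\<^esub> K"
    then obtain x y where xy: "x \<in> H" "y \<in> K" "a = x \<oplus>\<^bsub>M\<^esub> y" unfolding mem_set_add_iff by blast
    then have "\<ominus>\<^bsub>M\<^esub> a = \<ominus>\<^bsub>M\<^esub> x \<oplus>\<^bsub>M\<^esub> \<ominus>\<^bsub>M\<^esub> y" using h(1) k(1) by (simp add: M.minus_add subsetD)
    then show "\<exists>h\<in>H. \<exists>k\<in>K. \<ominus>\<^bsub>M\<^esub> a = h \<oplus>\<^bsub>M\<^esub> k" using xy h(3) k(3) by blast
  next
    fix a b assume "a \<in> H <+>\<^bsub>M\<^esub> K" "b \<in> H <+>\<^bsub>M\<^esub> K"
    then obtain x y x' y' where xy: "x \<in> H" "y \<in> K" "a = x \<oplus>\<^bsub>M\<^esub> y" "x' \<in> H" "y' \<in> K" "b = x' \<oplus>\<^bsub>M\<^esub> y'"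
      unfolding mem_set_add_iff by blast
    then have "a \<oplus>\<^bsub>M\<^esub> b = (x \<oplus>\<^bsub>M\<^esub> x') \<oplus>\<^bsub>M\<^esub> (y \<oplus>\<^bsub>M\<^esub> y')" using h(1) k(1) by (simp add: M.a_ac subsetD)
    then show "\<exists>h\<in>H. \<exists>k\<in>K. a \<oplus>\<^bsub>M\<^esub> b = h \<oplus>\<^bsub>M\<^esub> k" using xy h(4) k(4) by blast
  next
    fix r a assume r: "r \<in> carrier R" and "a \<in> H <+>\<^bsub>M\<^esub> K"
    then obtain x y where xy: "x \<in> H" "y \<in> K" "a = x \<oplus>\<^bsub>M\<^esub> y" unfolding mem_set_add_iff by blast
    then have "r \<odot>\<^bsub>M\<^esub> a = r \<odot>\<^bsub>M\<^esub> x \<oplus>\<^bsub>M\<^esub> r \<odot>\<^bsub>M\<^esub> y" using h(1) k(1) r by (simp add: smult_r_distr subsetD)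
    then show "\<exists>h\<in>H. \<exists>k\<in>K. r \<odot>\<^bsub>M\<^esub> a = h \<oplus>\<^bsub>M\<^esub> k" using xy h(5) k(5) r by blast
  qed
qed

lemma set_add_upper:
  assumes "submodule H R M" and "submodule K R M"
  shows "H \<subseteq> H <+>\<^bsub>M\<^esub> K" and "K \<subseteq> H <+>\<^bsub>M\<^esub> K"
proof -
  have "H \<subseteq> carrier M" "K \<subseteq> carrier M" "\<zero>\<^bsub>M\<^esub> \<in> H" "\<zero>\<^bsub>M\<^esub> \<in> K"
    using assms unfolding submodule_iff by auto
  then show "H \<subseteq> H <+>\<^bsub>M\<^esub> K" "K \<subseteq> H <+>\<^bsub>M\<^esub> K"
    unfolding mem_set_add_iff subset_iff by (metis M.r_zero, metis M.l_zero)
qed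

lemma set_add_least:
  "submodule S R M \<Longrightarrow> H \<subseteq> S \<Longrightarrow> K \<subseteq> S \<Longrightarrow> H <+>\<^bsub>M\<^esub> K \<subseteq> S"
  unfolding submodule_iff set_add_def' by blast

lemma set_add_absorb:
  assumes "submodule H R M" and "submodule K R M" and "K \<subseteq> H"
  shows "H <+>\<^bsub>M\<^esub> K = H" and "K <+>\<^bsub>M\<^esub> H = H"
  using set_add_upper[OF assms(1,2)] set_add_upper[OF assms(2,1)] set_add_least[OF assms(1)] assms(3)
  by blast+

lemma modular_law:
  assumes H: "submodule H R M" and T: "submodule T R M" and D: "submodule D R M" and "D \<subseteq> H"
  shows "H \<inter> (T <+>\<^bsub>M\<^esub> D) = (H \<inter> T) <+>\<^bsub>M\<^esub> D"
proof
  show "(H \<inter> T) <+>\<^bsub>M\<^esub> D \<subseteq> H \<inter> (T <+>\<^bsub>M\<^esub> D)"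
    using set_add_least[OF H, of "H \<inter> T" D] \<open>D \<subseteq> H\<close> set_add_mono[of "H \<inter> T" T D D M] by blast
  show "H \<inter> (T <+>\<^bsub>M\<^esub> D) \<subseteq> (H \<inter> T) <+>\<^bsub>M\<^esub> D"
  proof
    fix h assume "h \<in> H \<inter> (T <+>\<^bsub>M\<^esub> D)"
    then obtain t d where h: "h \<in> H" and td: "t \<in> T" "d \<in> D" "h = t \<oplus>\<^bsub>M\<^esub> d"
      by (auto simp: mem_set_add_iff)
    have c: "t \<in> carrier M" "d \<in> carrier M"
      using td T D unfolding submodule_iff by auto
    have "t = h \<oplus>\<^bsub>M\<^esub> \<ominus>\<^bsub>M\<^esub> d" using c td(3) by (simp add: M.a_assoc M.r_neg)
    also have "\<dots> \<in> H" using h td(2) \<open>D \<subseteq> H\<close> H unfolding submodule_iff by blast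
    finally show "h \<in> (H \<inter> T) <+>\<^bsub>M\<^esub> D" using td unfolding mem_set_add_iff by blast
  qed
qed

lemma module_endo_zero:
  assumes "module_endo R M f"
  shows "f \<zero>\<^bsub>M\<^esub> = \<zero>\<^bsub>M\<^esub>"
proof -
  have "f \<zero>\<^bsub>M\<^esub> \<oplus>\<^bsub>M\<^esub> f \<zero>\<^bsub>M\<^esub> = f \<zero>\<^bsub>M\<^esub>"
    using assms unfolding module_endo_def by (metis M.zero_closed M.r_zero)
  then show ?thesis
    using assms unfolding module_endo_def by (simp add: M.add.l_cancel_one')
qed

lemma module_endo_a_inv:
  assumes "module_endo R M f" and a: "a \<in> carrier M"
  shows "f (\<ominus>\<^bsub>M\<^esub> a) = \<ominus>\<^bsub>M\<^esub> f a"
proof -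
  have "f (\<ominus>\<^bsub>M\<^esub> a) \<oplus>\<^bsub>M\<^esub> f a = \<zero>\<^bsub>M\<^esub>"
    using assms module_endo_zero[OF assms(1)] unfolding module_endo_def by (metis M.a_inv_closed M.l_neg)
  then show ?thesis
    using assms unfolding module_endo_def by (simp add: M.minus_equality)
qed

lemma submodule_image:
  assumes f: "module_endo R M f" and H: "submodule H R M"
  shows "submodule (f ` H) R M"
proof -
  have "H \<subseteq> carrier M" using H unfolding submodule_iff by blast
  then show ?thesis
    using H module_endo_zero[OF f] module_endo_a_inv[OF f] f
    unfolding submodule_iff module_endo_def by (auto simp: subset_iff) (metis image_eqI)+
qed

lemma submodule_fixed_points:
  assumes "module_endo R M f"
  shows "submodule {a \<in> carrier M. f a = a} R M"
  using assms module_endo_zero[OF assms] module_endo_a_inv[OF assms]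
  unfolding submodule_iff module_endo_def by auto

end

section \<open>Minimax series in the lattice of submodules\<close>

definition submodules_between ::
    "('r, 'c) ring_scheme \<Rightarrow> ('r, 'm, 'd) module_scheme \<Rightarrow> 'm set \<Rightarrow> 'm set \<Rightarrow> 'm set \<Rightarrow> bool" where
  "submodules_between R M Lo Hi H \<longleftrightarrow> submodule H R M \<and> Lo \<subseteq> H \<and> H \<subseteq> Hi"

definition minimax_factor ::
    "('r, 'c) ring_scheme \<Rightarrow> ('r, 'm, 'd) module_scheme \<Rightarrow> 'm set \<Rightarrow> 'm set \<Rightarrow> bool" where
  "minimax_factor R M Lo Hi \<longleftrightarrow> submodule Hi R M \<and> Lo \<subseteq> Hi \<and>
     (acc (submodules_between R M Lo Hi) \<or> dcc (submodules_between R M Lo Hi))"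

text \<open>\<open>minimax_series R M H K\<close> says that \<open>K/H\<close> is a minimax module, stated inside the lattice
  of submodules of \<open>M\<close>: a factor is noetherian (artinian) iff the submodules between its two ends
  satisfy ACC (DCC).\<close>
inductive minimax_series ::
    "('r, 'c) ring_scheme \<Rightarrow> ('r, 'm, 'd) module_scheme \<Rightarrow> 'm set \<Rightarrow> 'm set \<Rightarrow> bool"
  for R M where
  minimax_series_refl: "submodule H R M \<Longrightarrow> minimax_series R M H H"
| minimax_series_snoc: "minimax_series R M H K \<Longrightarrow> minimax_factor R M K L \<Longrightarrow> minimax_series R M H L"

lemma minimax_series_submodules:
  "minimax_series R M H K \<Longrightarrow> submodule H R M \<and> submodule K R M \<and> H \<subseteq> K"
  by (induction rule: minimax_series.induct) (auto simp: minimax_factor_def)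

lemma minimax_series_trans:
  "minimax_series R M K L \<Longrightarrow> minimax_series R M H K \<Longrightarrow> minimax_series R M H L"
  by (induction rule: minimax_series.induct) (auto intro: minimax_series_snoc)

lemma minimax_series_map:
  assumes "minimax_series R M H K"
    and "submodule (\<Phi> H) R N"
    and "\<And>Lo Hi. submodule Lo R M \<Longrightarrow> H \<subseteq> Lo \<Longrightarrow> minimax_factor R M Lo Hi \<Longrightarrow>
           minimax_factor R N (\<Phi> Lo) (\<Phi> Hi)"
  shows "minimax_series R N (\<Phi> H) (\<Phi> K)"
  using assms
proof (induction rule: minimax_series.induct)
  case (minimax_series_refl H)
  then show ?case by (blast intro: minimax_series.minimax_series_refl)
next
  case (minimax_series_snoc H K L)
  then show ?case
    using minimax_series_submodules[OF minimax_series_snoc.hyps(1)]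
    by (blast intro: minimax_series.minimax_series_snoc)
qed

lemma minimax_factor_embedding:
  assumes "minimax_factor R M Lo Hi" and "submodule Hi' R N" and "Lo' \<subseteq> Hi'"
    and "\<And>H. submodules_between R N Lo' Hi' H \<Longrightarrow> submodules_between R M Lo Hi (g H)"
    and "\<And>H K. submodules_between R N Lo' Hi' H \<Longrightarrow> submodules_between R N Lo' Hi' K \<Longrightarrow>
           H \<subseteq> K \<Longrightarrow> g H \<subseteq> g K"
    and "\<And>H K. submodules_between R N Lo' Hi' H \<Longrightarrow> submodules_between R N Lo' Hi' K \<Longrightarrow>
           g H = g K \<Longrightarrow> H = K"
  shows "minimax_factor R N Lo' Hi'"
proof -
  have "acc (submodules_between R M Lo Hi) \<Longrightarrow> acc (submodules_between R N Lo' Hi')"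
    by (erule acc_embedding) (fact assms(4), fact assms(5), fact assms(6))
  moreover have "dcc (submodules_between R M Lo Hi) \<Longrightarrow> dcc (submodules_between R N Lo' Hi')"
    by (erule dcc_embedding) (fact assms(4), fact assms(5), fact assms(6))
  ultimately show ?thesis
    using assms(1-3) unfolding minimax_factor_def by blast
qed

lemma minimax_series_iff_chain:
  "minimax_series R M H K \<longleftrightarrow> (\<exists>n S. S 0 = H \<and> S n = K \<and> (\<forall>i\<le>n. submodule (S i) R M) \<and>
     (\<forall>i<n. minimax_factor R M (S i) (S (Suc i))))"
proof
  assume "minimax_series R M H K"
  then show "\<exists>n S. S 0 = H \<and> S n = K \<and> (\<forall>i\<le>n. submodule (S i) R M) \<and>
     (\<forall>i<n. minimax_factor R M (S i) (S (Suc i)))"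
  proof (induction rule: minimax_series.induct)
    case (minimax_series_refl H)
    then show ?case by (intro exI[of _ 0] exI[of _ "\<lambda>_. H"]) simp
  next
    case (minimax_series_snoc H K L)
    then obtain n S where S: "S 0 = H" "S n = K" "\<forall>i\<le>n. submodule (S i) R M"
        "\<forall>i<n. minimax_factor R M (S i) (S (Suc i))"
      by blast
    have "submodule L R M" using minimax_series_snoc.hyps(2) unfolding minimax_factor_def by blast
    then show ?case
      using S minimax_series_snoc.hyps(2)
      by (intro exI[of _ "Suc n"] exI[of _ "S(Suc n := L)"]) (auto simp: le_Suc_eq less_Suc_eq)
  qed
next
  assume "\<exists>n S. S 0 = H \<and> S n = K \<and> (\<forall>i\<le>n. submodule (S i) R M) \<and>
     (\<forall>i<n. minimax_factor R M (S i) (S (Suc i)))"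
  then obtain n S where S: "S 0 = H" "S n = K" "\<forall>i\<le>n. submodule (S i) R M"
      "\<forall>i<n. minimax_factor R M (S i) (S (Suc i))"
    by blast
  have "minimax_series R M (S 0) (S k)" if "k \<le> n" for k
    using that
  proof (induction k)
    case 0
    then show ?case using S(3) by (simp add: minimax_series_refl)
  next
    case (Suc k)
    then show ?case using S(4) by (auto intro: minimax_series_snoc)
  qed
  then show "minimax_series R M H K" using S(1,2) by blast
qed

context left_module
begin

lemma minimax_factor_set_add:
  assumes LH: "minimax_factor R M Lo Hi" and Lo: "submodule Lo R M" and D: "submodule D R M"
  shows "minimax_factor R M (Lo <+>\<^bsub>M\<^esub> D) (Hi <+>\<^bsub>M\<^esub> D)"
proof -
  have Hi: "submodule Hi R M" and "Lo \<subseteq> Hi" using LH unfolding minimax_factor_def by auto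
  have eq: "Z = (Z \<inter> Hi) <+>\<^bsub>M\<^esub> D"
    if "submodules_between R M (Lo <+>\<^bsub>M\<^esub> D) (Hi <+>\<^bsub>M\<^esub> D) Z" for Z
  proof -
    have Z: "submodule Z R M" "Lo <+>\<^bsub>M\<^esub> D \<subseteq> Z" "Z \<subseteq> Hi <+>\<^bsub>M\<^esub> D"
      using that unfolding submodules_between_def by auto
    have "D \<subseteq> Z" using set_add_upper(2)[OF Lo D] Z(2) by (rule order_trans)
    have "Z = Z \<inter> (Hi <+>\<^bsub>M\<^esub> D)" using Z(3) by blast
    also have "\<dots> = (Z \<inter> Hi) <+>\<^bsub>M\<^esub> D" by (rule modular_law[OF Z(1) Hi D \<open>D \<subseteq> Z\<close>])
    finally show ?thesis .
  qed
  show ?thesis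
  proof (rule minimax_factor_embedding[OF LH, where g = "\<lambda>Z. Z \<inter> Hi"])
    show "submodule (Hi <+>\<^bsub>M\<^esub> D) R M" by (rule submodule_set_add[OF Hi D])
    show "Lo <+>\<^bsub>M\<^esub> D \<subseteq> Hi <+>\<^bsub>M\<^esub> D" using \<open>Lo \<subseteq> Hi\<close> by (rule set_add_mono) simp
  next
    fix Z assume Z: "submodules_between R M (Lo <+>\<^bsub>M\<^esub> D) (Hi <+>\<^bsub>M\<^esub> D) Z"
    have "Lo \<subseteq> Z"
      using set_add_upper(1)[OF Lo D] Z unfolding submodules_between_def by blast
    then show "submodules_between R M Lo Hi (Z \<inter> Hi)"
      using submodule_Int[OF _ Hi, of Z] Z \<open>Lo \<subseteq> Hi\<close> unfolding submodules_between_def by simp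
  next
    fix Z Z' assume "submodules_between R M (Lo <+>\<^bsub>M\<^esub> D) (Hi <+>\<^bsub>M\<^esub> D) Z"
      and "submodules_between R M (Lo <+>\<^bsub>M\<^esub> D) (Hi <+>\<^bsub>M\<^esub> D) Z'"
      and "Z \<inter> Hi = Z' \<inter> Hi"
    then show "Z = Z'" using eq by metis
  qed auto
qed

lemma minimax_factor_Int:
  assumes LH: "minimax_factor R M Lo Hi" and Lo: "submodule Lo R M" and D: "submodule D R M"
  shows "minimax_factor R M (Lo \<inter> D) (Hi \<inter> D)"
proof -
  have Hi: "submodule Hi R M" and "Lo \<subseteq> Hi" using LH unfolding minimax_factor_def by auto
  have eq: "Z = D \<inter> (Lo <+>\<^bsub>M\<^esub> Z)" if "submodules_between R M (Lo \<inter> D) (Hi \<inter> D) Z" for Z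
  proof -
    have Z: "submodule Z R M" "Lo \<inter> D \<subseteq> Z" "Z \<subseteq> D"
      using that unfolding submodules_between_def by auto
    have "Z = (D \<inter> Lo) <+>\<^bsub>M\<^esub> Z"
      using set_add_absorb(2)[OF Z(1) submodule_Int[OF D Lo]] Z(2) by blast
    also have "\<dots> = D \<inter> (Lo <+>\<^bsub>M\<^esub> Z)" by (rule modular_law[OF D Lo Z(1,3), symmetric])
    finally show ?thesis .
  qed
  show ?thesis
  proof (rule minimax_factor_embedding[OF LH, where g = "\<lambda>Z. Lo <+>\<^bsub>M\<^esub> Z"])
    show "submodule (Hi \<inter> D) R M" by (rule submodule_Int[OF Hi D])
    show "Lo \<inter> D \<subseteq> Hi \<inter> D" using \<open>Lo \<subseteq> Hi\<close> by blast
  next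
    fix Z assume "submodules_between R M (Lo \<inter> D) (Hi \<inter> D) Z"
    then have Z: "submodule Z R M" "Z \<subseteq> Hi" unfolding submodules_between_def by auto
    show "submodules_between R M Lo Hi (Lo <+>\<^bsub>M\<^esub> Z)"
      unfolding submodules_between_def
      using submodule_set_add[OF Lo Z(1)] set_add_upper(1)[OF Lo Z(1)]
        set_add_least[OF Hi \<open>Lo \<subseteq> Hi\<close> Z(2)] by blast
  next
    fix Z Z' assume "submodules_between R M (Lo \<inter> D) (Hi \<inter> D) Z"
      and "submodules_between R M (Lo \<inter> D) (Hi \<inter> D) Z'"
      and "Lo <+>\<^bsub>M\<^esub> Z = Lo <+>\<^bsub>M\<^esub> Z'"
    then show "Z = Z'" using eq by metis
  qed (rule set_add_mono; simp)
qed

lemma minimax_factor_image: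
  assumes LH: "minimax_factor R M Lo Hi"
    and f: "module_endo R M f" and g: "module_endo R M g"
    and gf: "\<And>a. a \<in> carrier M \<Longrightarrow> g (f a) = a" and fg: "\<And>a. a \<in> carrier M \<Longrightarrow> f (g a) = a"
  shows "minimax_factor R M (f ` Lo) (f ` Hi)"
proof -
  have Hi: "submodule Hi R M" and "Lo \<subseteq> Hi" using LH unfolding minimax_factor_def by auto
  have gf_image: "g ` f ` H = H" if "H \<subseteq> carrier M" for H
    using that gf by (force simp: image_image)
  have fg_image: "f ` g ` H = H" if "H \<subseteq> carrier M" for H
    using that fg by (force simp: image_image)
  have "Hi \<subseteq> carrier M" using Hi unfolding submodule_iff by blast
  show ?thesis
  proof (rule minimax_factor_embedding[OF LH, where g = "image g"])
    show "submodule (f ` Hi) R M" by (rule submodule_image[OF f Hi])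
    show "f ` Lo \<subseteq> f ` Hi" using \<open>Lo \<subseteq> Hi\<close> by (rule image_mono)
  next
    fix Z assume "submodules_between R M (f ` Lo) (f ` Hi) Z"
    then have "submodule (g ` Z) R M" "g ` f ` Lo \<subseteq> g ` Z" "g ` Z \<subseteq> g ` f ` Hi"
      using submodule_image[OF g] unfolding submodules_between_def by auto
    then show "submodules_between R M Lo Hi (g ` Z)"
      using gf_image \<open>Lo \<subseteq> Hi\<close> \<open>Hi \<subseteq> carrier M\<close> unfolding submodules_between_def by auto
  next
    fix Z Z' assume "submodules_between R M (f ` Lo) (f ` Hi) Z" "submodules_between R M (f ` Lo) (f ` Hi) Z'"
      and "g ` Z = g ` Z'"
    then show "Z = Z'"
      using fg_image unfolding submodules_between_def submodule_iff by metis
  qed (rule image_mono)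
qed

lemma minimax_series_set_add:
  assumes "minimax_series R M H K" and "submodule D R M"
  shows "minimax_series R M (H <+>\<^bsub>M\<^esub> D) (K <+>\<^bsub>M\<^esub> D)"
  using assms(1)
proof (rule minimax_series_map)
  show "submodule (H <+>\<^bsub>M\<^esub> D) R M"
    using submodule_set_add minimax_series_submodules[OF assms(1)] assms(2) by blast
qed (use minimax_factor_set_add assms(2) in blast)

lemma minimax_series_Int:
  assumes "minimax_series R M H K" and "submodule D R M"
  shows "minimax_series R M (H \<inter> D) (K \<inter> D)"
  using assms(1)
proof (rule minimax_series_map)
  show "submodule (H \<inter> D) R M"
    using submodule_Int minimax_series_submodules[OF assms(1)] assms(2) by blast
qed (use minimax_factor_Int assms(2) in blast)

lemma minimax_series_image:
  assumes "minimax_series R M H K"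
    and f: "module_endo R M f" and g: "module_endo R M g"
    and gf: "\<And>a. a \<in> carrier M \<Longrightarrow> g (f a) = a" and fg: "\<And>a. a \<in> carrier M \<Longrightarrow> f (g a) = a"
  shows "minimax_series R M (f ` H) (f ` K)"
  using assms(1)
proof (rule minimax_series_map)
  show "submodule (f ` H) R M"
    using submodule_image[OF f] minimax_series_submodules[OF assms(1)] by blast
qed (use minimax_factor_image[OF _ f g gf fg] in blast)

lemma minimax_series_carrier_mono:
  assumes C: "minimax_series R M C (carrier M)" and "C \<subseteq> D" and D: "submodule D R M"
  shows "minimax_series R M D (carrier M)"
proof -
  have "submodule C R M" "D \<subseteq> carrier M"
    using minimax_series_submodules[OF C] D unfolding submodule_iff by auto
  then have "C <+>\<^bsub>M\<^esub> D = D" and "carrier M <+>\<^bsub>M\<^esub> D = carrier M"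
    using set_add_absorb(2)[OF D _ \<open>C \<subseteq> D\<close>] set_add_absorb(1)[OF submodule_carrier D] by auto
  then show ?thesis
    using minimax_series_set_add[OF C D] by simp
qed

lemma minimax_series_carrier_Int:
  assumes C: "minimax_series R M C (carrier M)" and D: "minimax_series R M D (carrier M)"
  shows "minimax_series R M (C \<inter> D) (carrier M)"
proof -
  have "submodule D R M" using minimax_series_submodules[OF D] by blast
  then have "minimax_series R M (C \<inter> D) D"
    using minimax_series_Int[OF C] unfolding submodule_iff by (metis inf.absorb_iff2)
  then show ?thesis using D by (rule minimax_series_trans[rotated])
qed

lemma minimax_series_carrier_image:
  assumes C: "minimax_series R M C (carrier M)"
    and f: "module_endo R M f" and g: "module_endo R M g"
    and gf: "\<And>a. a \<in> carrier M \<Longrightarrow> g (f a) = a" and fg: "\<And>a. a \<in> carrier M \<Longrightarrow> f (g a) = a"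
  shows "minimax_series R M (f ` C) (carrier M)"
proof -
  have "f ` carrier M = carrier M"
    using f g fg unfolding module_endo_def by (metis image_subset_iff subsetI subset_antisym imageI)
  then show ?thesis
    using minimax_series_image[OF C f g gf fg] by simp
qed

end

section \<open>Quotient modules and the correspondence theorem\<close>

lemma quot_module_simps:
  "carrier (quot_module M L) = a_rcosets\<^bsub>M\<^esub> L"
  "ring.zero (quot_module M L) = L"
  "ring.add (quot_module M L) = (\<lambda>U V. U <+>\<^bsub>M\<^esub> V)"
  "module.smult (quot_module M L) = (\<lambda>r U. L <+>\<^bsub>M\<^esub> ((\<lambda>u. r \<odot>\<^bsub>M\<^esub> u) ` U))"
  by (simp_all add: quot_module_def)

definition quot_image :: "('r, 'm, 'd) module_scheme \<Rightarrow> 'm set \<Rightarrow> 'm set \<Rightarrow> 'm set set" where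
  "quot_image M L H = (\<lambda>h. L +>\<^bsub>M\<^esub> h) ` H"

lemma quot_image_mono: "H \<subseteq> K \<Longrightarrow> quot_image M L H \<subseteq> quot_image M L K"
  unfolding quot_image_def by (rule image_mono)

locale submodule_quotient = left_module R M
  for R :: "('r, 'c) ring_scheme" and M :: "('r, 'm, 'd) module_scheme" +
  fixes L :: "'m set"
  assumes L_submodule: "submodule L R M"
begin

sublocale L: abelian_subgroup L M
  by (rule submodule_abelian_subgroup[OF L_submodule])

abbreviation Q :: "('r, 'm set) module" where "Q \<equiv> quot_module M L"

lemma L_subset: "L \<subseteq> carrier M"
  using L_submodule unfolding submodule_iff by blast

lemma quot_carrier_eq: "carrier Q = (\<lambda>x. L +>\<^bsub>M\<^esub> x) ` carrier M"
  unfolding quot_module_simps A_RCOSETS_def' by auto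

lemma coset_in_quot_carrier: "x \<in> carrier M \<Longrightarrow> L +>\<^bsub>M\<^esub> x \<in> carrier Q"
  unfolding quot_carrier_eq by blast

lemma quot_zero_eq: "\<zero>\<^bsub>Q\<^esub> = L +>\<^bsub>M\<^esub> \<zero>\<^bsub>M\<^esub>"
  using L_subset by (simp add: quot_module_simps)

lemma quot_add_coset:
  "x \<in> carrier M \<Longrightarrow> y \<in> carrier M \<Longrightarrow> (L +>\<^bsub>M\<^esub> x) \<oplus>\<^bsub>Q\<^esub> (L +>\<^bsub>M\<^esub> y) = L +>\<^bsub>M\<^esub> (x \<oplus>\<^bsub>M\<^esub> y)"
  by (simp add: quot_module_simps L.a_rcos_sum)

lemma quot_smult_coset:
  assumes x: "x \<in> carrier M" and r: "r \<in> carrier R"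
  shows "r \<odot>\<^bsub>Q\<^esub> (L +>\<^bsub>M\<^esub> x) = L +>\<^bsub>M\<^esub> (r \<odot>\<^bsub>M\<^esub> x)"
proof -
  have Ls: "\<zero>\<^bsub>M\<^esub> \<in> L" "\<And>a b. a\<in>L \<Longrightarrow> b\<in>L \<Longrightarrow> a \<oplus>\<^bsub>M\<^esub> b \<in> L"
    "\<And>a. a\<in>L \<Longrightarrow> r \<odot>\<^bsub>M\<^esub> a \<in> L"
    using L_submodule r unfolding submodule_iff by auto
  have c: "\<And>a. a \<in> L \<Longrightarrow> a \<in> carrier M" using L_subset by blast
  show ?thesis
    unfolding quot_module_simps
  proof (intro equalityI subsetI)
    fix z assume "z \<in> L <+>\<^bsub>M\<^esub> ((\<lambda>u. r \<odot>\<^bsub>M\<^esub> u) ` (L +>\<^bsub>M\<^esub> x))"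
    then obtain l1 l2 where l: "l1 \<in> L" "l2 \<in> L" and z: "z = l1 \<oplus>\<^bsub>M\<^esub> r \<odot>\<^bsub>M\<^esub> (l2 \<oplus>\<^bsub>M\<^esub> x)"
      unfolding set_add_def' a_r_coset_def' by auto
    have "z = (l1 \<oplus>\<^bsub>M\<^esub> r \<odot>\<^bsub>M\<^esub> l2) \<oplus>\<^bsub>M\<^esub> r \<odot>\<^bsub>M\<^esub> x"
      using z l r x c by (simp add: smult_r_distr M.a_assoc)
    moreover have "l1 \<oplus>\<^bsub>M\<^esub> r \<odot>\<^bsub>M\<^esub> l2 \<in> L" using l Ls by simp
    ultimately show "z \<in> L +>\<^bsub>M\<^esub> (r \<odot>\<^bsub>M\<^esub> x)" unfolding a_r_coset_def' by auto
  next
    fix z assume "z \<in> L +>\<^bsub>M\<^esub> (r \<odot>\<^bsub>M\<^esub> x)"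
    then obtain l where l: "l \<in> L" and z: "z = l \<oplus>\<^bsub>M\<^esub> r \<odot>\<^bsub>M\<^esub> x"
      unfolding a_r_coset_def' by auto
    have "r \<odot>\<^bsub>M\<^esub> x \<in> (\<lambda>u. r \<odot>\<^bsub>M\<^esub> u) ` (L +>\<^bsub>M\<^esub> x)"
      using L.a_rcos_self[OF x] by blast
    then show "z \<in> L <+>\<^bsub>M\<^esub> ((\<lambda>u. r \<odot>\<^bsub>M\<^esub> u) ` (L +>\<^bsub>M\<^esub> x))"
      using z l unfolding set_add_def' by blast
  qed
qed

text \<open>The additive structure of \<open>Q\<close> is that of the library factor group \<open>M A_Mod L\<close>.\<close>
lemma quot_abelian_group: "abelian_group Q"
proof (rule comm_group_abelian_groupI)
  interpret F: comm_group "M A_Mod L" by (rule L.a_factorgroup_is_comm_group)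
  note F_simps = quot_module_def A_FactGroup_def'
  show "comm_group (add_monoid Q)"
  proof (rule comm_groupI, goal_cases)
    case 1 then show ?case using F.m_closed by (simp add: F_simps)
  next
    case 2 then show ?case using F.one_closed by (simp add: F_simps)
  next
    case 3 then show ?case using F.m_assoc by (simp add: F_simps)
  next
    case 4 then show ?case using F.m_comm by (simp add: F_simps)
  next
    case 5 then show ?case using F.l_one by (simp add: F_simps)
  next
    case 6 then show ?case using F.l_inv_ex by (simp add: F_simps)
  qed
qed

lemma quot_left_module: "left_module R Q"
  by (intro left_module.intro R.ring_axioms quot_abelian_group left_module_axioms.intro,
      unfold quot_carrier_eq)
    (auto simp: quot_smult_coset quot_add_coset smult_l_distr smult_r_distr smult_assoc1)

sublocale Q: left_module R Q
  by (rule quot_left_module)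

lemma quot_a_inv_coset:
  assumes x: "x \<in> carrier M"
  shows "\<ominus>\<^bsub>Q\<^esub> (L +>\<^bsub>M\<^esub> x) = L +>\<^bsub>M\<^esub> (\<ominus>\<^bsub>M\<^esub> x)"
proof (rule Q.M.minus_equality)
  show "(L +>\<^bsub>M\<^esub> (\<ominus>\<^bsub>M\<^esub> x)) \<oplus>\<^bsub>Q\<^esub> (L +>\<^bsub>M\<^esub> x) = \<zero>\<^bsub>Q\<^esub>"
    using x by (simp add: quot_add_coset quot_zero_eq M.l_neg)
qed (use x coset_in_quot_carrier in simp_all)

lemma submodule_quot_image:
  assumes H: "submodule H R M"
  shows "submodule (quot_image M L H) R Q"
proof -
  have Hs: "H \<subseteq> carrier M" "\<zero>\<^bsub>M\<^esub> \<in> H" "\<And>a. a\<in>H \<Longrightarrow> \<ominus>\<^bsub>M\<^esub> a \<in> H"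
     "\<And>a b. a\<in>H \<Longrightarrow> b\<in>H \<Longrightarrow> a \<oplus>\<^bsub>M\<^esub> b \<in> H" "\<And>r a. r\<in>carrier R \<Longrightarrow> a\<in>H \<Longrightarrow> r \<odot>\<^bsub>M\<^esub> a \<in> H"
    using H unfolding submodule_iff by auto
  then have c: "\<And>h. h \<in> H \<Longrightarrow> h \<in> carrier M" by blast
  show ?thesis
    unfolding submodule_iff quot_image_def
  proof (intro conjI ballI)
    show "(\<lambda>h. L +>\<^bsub>M\<^esub> h) ` H \<subseteq> carrier Q"
      using coset_in_quot_carrier c by blast
    show "\<zero>\<^bsub>Q\<^esub> \<in> (\<lambda>h. L +>\<^bsub>M\<^esub> h) ` H"
      unfolding quot_zero_eq using Hs(2) by blast
  next
    fix a assume "a \<in> (\<lambda>h. L +>\<^bsub>M\<^esub> h) ` H"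
    then show "\<ominus>\<^bsub>Q\<^esub> a \<in> (\<lambda>h. L +>\<^bsub>M\<^esub> h) ` H"
      using quot_a_inv_coset c Hs(3) by auto
  next
    fix a b assume "a \<in> (\<lambda>h. L +>\<^bsub>M\<^esub> h) ` H" "b \<in> (\<lambda>h. L +>\<^bsub>M\<^esub> h) ` H"
    then show "a \<oplus>\<^bsub>Q\<^esub> b \<in> (\<lambda>h. L +>\<^bsub>M\<^esub> h) ` H"
      using quot_add_coset c Hs(4) by auto
  next
    fix r a assume "r \<in> carrier R" "a \<in> (\<lambda>h. L +>\<^bsub>M\<^esub> h) ` H"
    then show "r \<odot>\<^bsub>Q\<^esub> a \<in> (\<lambda>h. L +>\<^bsub>M\<^esub> h) ` H"
      using quot_smult_coset c Hs(5) by auto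
  qed
qed

lemma Union_quot_image:
  assumes H: "submodule H R M" and LH: "L \<subseteq> H"
  shows "\<Union> (quot_image M L H) = H"
proof (intro equalityI subsetI)
  fix u assume "u \<in> \<Union> (quot_image M L H)"
  then obtain h l where "h \<in> H" "l \<in> L" "u = l \<oplus>\<^bsub>M\<^esub> h"
    unfolding quot_image_def a_r_coset_def' by blast
  then show "u \<in> H"
    using LH H unfolding submodule_iff by blast
next
  fix u assume "u \<in> H"
  then show "u \<in> \<Union> (quot_image M L H)"
    using L.a_rcos_self H unfolding quot_image_def submodule_iff by blast
qed

lemma mem_Union_quot:
  assumes "Hq \<subseteq> carrier Q"
  shows "u \<in> \<Union>Hq \<longleftrightarrow> u \<in> carrier M \<and> L +>\<^bsub>M\<^esub> u \<in> Hq"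
proof
  assume "u \<in> \<Union>Hq"
  then obtain x where "x \<in> carrier M" "L +>\<^bsub>M\<^esub> x \<in> Hq" "u \<in> L +>\<^bsub>M\<^esub> x"
    using assms unfolding quot_carrier_eq by blast
  then show "u \<in> carrier M \<and> L +>\<^bsub>M\<^esub> u \<in> Hq"
    using L.a_repr_independence' L.a_elemrcos_carrier by metis
next
  assume "u \<in> carrier M \<and> L +>\<^bsub>M\<^esub> u \<in> Hq"
  then show "u \<in> \<Union>Hq" using L.a_rcos_self by blast
qed

lemma submodule_Union_quot:
  assumes Hq: "submodule Hq R Q"
  shows "submodule (\<Union>Hq) R M"
proof -
  have Hqs: "Hq \<subseteq> carrier Q" "L \<in> Hq" "\<And>a. a\<in>Hq \<Longrightarrow> \<ominus>\<^bsub>Q\<^esub> a \<in> Hq"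
     "\<And>a b. a\<in>Hq \<Longrightarrow> b\<in>Hq \<Longrightarrow> a \<oplus>\<^bsub>Q\<^esub> b \<in> Hq"
     "\<And>r a. r\<in>carrier R \<Longrightarrow> a\<in>Hq \<Longrightarrow> r \<odot>\<^bsub>Q\<^esub> a \<in> Hq"
    using Hq unfolding submodule_iff by (auto simp: quot_module_simps)
  note mem = mem_Union_quot[OF Hqs(1)]
  show ?thesis
    unfolding submodule_iff
  proof (intro conjI ballI)
    show "\<Union>Hq \<subseteq> carrier M" using mem by blast
    show "\<zero>\<^bsub>M\<^esub> \<in> \<Union>Hq" using L_submodule Hqs(2) unfolding submodule_iff by blast
  next
    fix a assume "a \<in> \<Union>Hq"
    then show "\<ominus>\<^bsub>M\<^esub> a \<in> \<Union>Hq" using mem quot_a_inv_coset Hqs(3) by (metis M.a_inv_closed)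
  next
    fix a b assume "a \<in> \<Union>Hq" "b \<in> \<Union>Hq"
    then show "a \<oplus>\<^bsub>M\<^esub> b \<in> \<Union>Hq" using mem quot_add_coset Hqs(4) by (metis M.add.m_closed)
  next
    fix r a assume "r \<in> carrier R" "a \<in> \<Union>Hq"
    then show "r \<odot>\<^bsub>M\<^esub> a \<in> \<Union>Hq" using mem quot_smult_coset Hqs(5) by (metis smult_closed)
  qed
qed

lemma L_subset_Union_quot: "submodule Hq R Q \<Longrightarrow> L \<subseteq> \<Union>Hq"
  using Q.M.zero_closed unfolding submodule_iff quot_module_simps by blast

lemma quot_image_Union:
  assumes Hq: "submodule Hq R Q"
  shows "quot_image M L (\<Union>Hq) = Hq"
proof -
  have Hqs: "Hq \<subseteq> carrier Q" using Hq unfolding submodule_iff by blast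
  show ?thesis
  proof (intro equalityI subsetI)
    fix U assume "U \<in> quot_image M L (\<Union>Hq)"
    then show "U \<in> Hq" using mem_Union_quot[OF Hqs] unfolding quot_image_def by blast
  next
    fix U assume U: "U \<in> Hq"
    then obtain x where "x \<in> carrier M" "U = L +>\<^bsub>M\<^esub> x" using Hqs unfolding quot_carrier_eq by blast
    then show "U \<in> quot_image M L (\<Union>Hq)"
      using mem_Union_quot[OF Hqs] U unfolding quot_image_def by blast
  qed
qed

lemma acc_dcc_quot_iff:
  assumes Hq: "submodule Hq R Q" and Kq: "submodule Kq R Q"
  shows "acc (submodules_between R Q Hq Kq) \<longleftrightarrow> acc (submodules_between R M (\<Union>Hq) (\<Union>Kq))"
    and "dcc (submodules_between R Q Hq Kq) \<longleftrightarrow> dcc (submodules_between R M (\<Union>Hq) (\<Union>Kq))"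
proof -
  let ?BQ = "submodules_between R Q Hq Kq" and ?BM = "submodules_between R M (\<Union>Hq) (\<Union>Kq)"
  have down: "?BM (\<Union>Zq)" if "?BQ Zq" for Zq
    using that submodule_Union_quot unfolding submodules_between_def by (blast intro: Union_mono)
  have down_inj: "Zq = Zq'" if "?BQ Zq" "?BQ Zq'" "\<Union>Zq = \<Union>Zq'" for Zq Zq'
    using that quot_image_Union unfolding submodules_between_def by metis
  have up: "?BQ (quot_image M L Z)" if "?BM Z" for Z
  proof -
    have Z: "submodule Z R M" "\<Union>Hq \<subseteq> Z" "Z \<subseteq> \<Union>Kq" using that unfolding submodules_between_def by auto
    have "Hq \<subseteq> quot_image M L Z" using quot_image_mono[OF Z(2), of M L] quot_image_Union[OF Hq] by simp
    moreover have "quot_image M L Z \<subseteq> Kq" using quot_image_mono[OF Z(3), of M L] quot_image_Union[OF Kq] by simp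
    ultimately show ?thesis using submodule_quot_image[OF Z(1)] unfolding submodules_between_def by blast
  qed
  have up_inj: "Z = Z'" if "?BM Z" "?BM Z'" "quot_image M L Z = quot_image M L Z'" for Z Z'
  proof -
    have "L \<subseteq> Z" "L \<subseteq> Z'" using that(1,2) L_subset_Union_quot[OF Hq] unfolding submodules_between_def by auto
    then show ?thesis using that Union_quot_image unfolding submodules_between_def by metis
  qed
  show "acc ?BQ \<longleftrightarrow> acc ?BM"
  proof
    show "acc ?BM \<Longrightarrow> acc ?BQ" by (erule acc_embedding[where g = Union]) (fact down, blast, fact down_inj)
    show "acc ?BQ \<Longrightarrow> acc ?BM" by (erule acc_embedding) (fact up, erule quot_image_mono, fact up_inj)
  qed
  show "dcc ?BQ \<longleftrightarrow> dcc ?BM"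
  proof
    show "dcc ?BM \<Longrightarrow> dcc ?BQ" by (erule dcc_embedding[where g = Union]) (fact down, blast, fact down_inj)
    show "dcc ?BQ \<Longrightarrow> dcc ?BM" by (erule dcc_embedding) (fact up, erule quot_image_mono, fact up_inj)
  qed
qed

lemma minimax_factor_quot_iff:
  assumes Hq: "submodule Hq R Q" and Kq: "submodule Kq R Q"
  shows "minimax_factor R Q Hq Kq \<longleftrightarrow> minimax_factor R M (\<Union>Hq) (\<Union>Kq)"
proof -
  have "Hq \<subseteq> Kq \<longleftrightarrow> \<Union>Hq \<subseteq> \<Union>Kq"
    using quot_image_mono quot_image_Union[OF Hq] quot_image_Union[OF Kq] by (metis Union_mono)
  then show ?thesis
    using acc_dcc_quot_iff[OF Hq Kq] Kq submodule_Union_quot[OF Kq] unfolding minimax_factor_def by blast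
qed

lemma minimax_series_quot_iff:
  "minimax_series R Q {L} (carrier Q) \<longleftrightarrow> minimax_series R M L (carrier M)"
proof
  assume "minimax_series R Q {L} (carrier Q)"
  then have "minimax_series R M (\<Union>{L}) (\<Union>(carrier Q))"
  proof (rule minimax_series_map)
    show "submodule (\<Union>{L}) R M" using L_submodule by simp
    fix Hq Kq assume "submodule Hq R Q" and HKq: "minimax_factor R Q Hq Kq"
    moreover have "submodule Kq R Q" using HKq unfolding minimax_factor_def by blast
    ultimately show "minimax_factor R M (\<Union>Hq) (\<Union>Kq)" using minimax_factor_quot_iff by blast
  qed
  moreover have "\<Union>(carrier Q) = carrier M"
    using L.a_rcosets_part_G by (simp add: quot_module_simps)
  ultimately show "minimax_series R M L (carrier M)" by simp
next
  assume "minimax_series R M L (carrier M)"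
  then have "minimax_series R Q (quot_image M L L) (quot_image M L (carrier M))"
  proof (rule minimax_series_map)
    show "submodule (quot_image M L L) R Q" by (rule submodule_quot_image[OF L_submodule])
    fix H K assume H: "submodule H R M" "L \<subseteq> H" and HK: "minimax_factor R M H K"
    have K: "submodule K R M" "L \<subseteq> K" using HK H(2) unfolding minimax_factor_def by auto
    have "minimax_factor R M (\<Union>(quot_image M L H)) (\<Union>(quot_image M L K))"
      using HK by (simp only: Union_quot_image[OF H] Union_quot_image[OF K])
    then show "minimax_factor R Q (quot_image M L H) (quot_image M L K)"
      by (simp only: minimax_factor_quot_iff[OF submodule_quot_image[OF H(1)] submodule_quot_image[OF K(1)]])
  qed
  moreover have "quot_image M L L = {L}"
    using L.a_rcos_const L_submodule unfolding quot_image_def submodule_iff by blast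
  moreover have "quot_image M L (carrier M) = carrier Q"
    unfolding quot_image_def quot_carrier_eq ..
  ultimately show "minimax_series R Q {L} (carrier Q)" by simp
qed

end

section \<open>Minimax quotients\<close>

context left_module
begin

lemma submodules_between_zero_carrier:
  "submodules_between R M {\<zero>\<^bsub>M\<^esub>} (carrier M) = (\<lambda>H. submodule H R M)"
  unfolding submodules_between_def submodule_iff by blast

lemma factor_chain_condition_iff:
  assumes Lo: "submodule Lo R M" and Hi: "submodule Hi R M" and "Lo \<subseteq> Hi"
  shows "noetherian_module R (quot_module (M\<lparr>carrier := Hi\<rparr>) Lo) \<longleftrightarrow> acc (submodules_between R M Lo Hi)"
    and "artinian_module R (quot_module (M\<lparr>carrier := Hi\<rparr>) Lo) \<longleftrightarrow> dcc (submodules_between R M Lo Hi)"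
proof -
  let ?N = "M\<lparr>carrier := Hi\<rparr>"
  have "submodule Lo R ?N" using submodule_restrict_iff[OF Hi] Lo \<open>Lo \<subseteq> Hi\<close> by blast
  interpret NQ: submodule_quotient R ?N Lo
    by (rule submodule_quotient.intro[OF restrict_left_module(1)[OF Hi]])
      (rule submodule_quotient_axioms.intro, fact)
  have zero: "\<zero>\<^bsub>NQ.Q\<^esub> = Lo" and top: "\<Union>(carrier NQ.Q) = Hi"
    using NQ.L.a_rcosets_part_G by (simp_all add: quot_module_simps)
  have restrict: "submodules_between R ?N Lo Hi = submodules_between R M Lo Hi"
    using submodule_restrict_iff[OF Hi] unfolding submodules_between_def by auto
  have whole: "submodules_between R NQ.Q {Lo} (carrier NQ.Q) = (\<lambda>H. submodule H R NQ.Q)"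
    using NQ.Q.submodules_between_zero_carrier by (simp only: zero)
  note corr = NQ.acc_dcc_quot_iff[OF NQ.Q.submodule_zero NQ.Q.submodule_carrier,
      unfolded zero ccpo_Sup_singleton top restrict whole]
  show "noetherian_module R NQ.Q \<longleftrightarrow> acc (submodules_between R M Lo Hi)"
    unfolding noetherian_module_iff_acc by (rule corr(1))
  show "artinian_module R NQ.Q \<longleftrightarrow> dcc (submodules_between R M Lo Hi)"
    unfolding artinian_module_iff_dcc by (rule corr(2))
qed

lemma minimax_module_iff_series: "minimax_module R M \<longleftrightarrow> minimax_series R M {\<zero>\<^bsub>M\<^esub>} (carrier M)"
proof -
  have step_iff: "(S i \<subseteq> S (Suc i) \<and>
      (noetherian_module R (quot_module (M\<lparr>carrier := S (Suc i)\<rparr>) (S i)) \<or>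
       artinian_module R (quot_module (M\<lparr>carrier := S (Suc i)\<rparr>) (S i))))
    \<longleftrightarrow> minimax_factor R M (S i) (S (Suc i))"
    if "\<forall>i\<le>n. submodule (S i) R M" "i < n" for S :: "nat \<Rightarrow> 'm set" and n i
  proof -
    have "submodule (S i) R M" "submodule (S (Suc i)) R M" using that by auto
    then show ?thesis using factor_chain_condition_iff unfolding minimax_factor_def by blast
  qed
  show ?thesis
    unfolding minimax_module_def minimax_series_iff_chain
    by (intro ex_cong1 conj_cong refl all_cong1 imp_cong) (simp_all add: step_iff)
qed

lemma minimax_quotient_iff:
  assumes "submodule C R M"
  shows "minimax_module R (quot_module M C) \<longleftrightarrow> minimax_series R M C (carrier M)"
proof -
  interpret submodule_quotient R M C
    by (rule submodule_quotient.intro[OF left_module_axioms submodule_quotient_axioms.intro[OF assms]])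
  show ?thesis
    using Q.minimax_module_iff_series minimax_series_quot_iff by (simp add: quot_module_simps)
qed

end

section \<open>Groups acting on modules\<close>

locale RG_action = A: left_module R A + G: group G
  for R :: "('r, 'c) ring_scheme" and A :: "('r, 'm, 'd) module_scheme"
    and G :: "('g, 'e) monoid_scheme" and act :: "'m \<Rightarrow> 'g \<Rightarrow> 'm" +
  assumes act_closed: "\<lbrakk>x \<in> carrier G; a \<in> carrier A\<rbrakk> \<Longrightarrow> act a x \<in> carrier A"
    and act_add: "\<lbrakk>x \<in> carrier G; a \<in> carrier A; b \<in> carrier A\<rbrakk> \<Longrightarrow>
      act (a \<oplus>\<^bsub>A\<^esub> b) x = act a x \<oplus>\<^bsub>A\<^esub> act b x"
    and act_smult: "\<lbrakk>x \<in> carrier G; r \<in> carrier R; a \<in> carrier A\<rbrakk> \<Longrightarrow>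
      act (r \<odot>\<^bsub>A\<^esub> a) x = r \<odot>\<^bsub>A\<^esub> act a x"
    and act_one: "a \<in> carrier A \<Longrightarrow> act a \<one>\<^bsub>G\<^esub> = a"
    and act_mult: "\<lbrakk>x \<in> carrier G; y \<in> carrier G; a \<in> carrier A\<rbrakk> \<Longrightarrow>
      act (act a x) y = act a (x \<otimes>\<^bsub>G\<^esub> y)"

lemma RG_module_imp_RG_action: "RG_module R G A act \<Longrightarrow> RG_action R A G act"
  unfolding RG_module_def RG_action_def RG_action_axioms_def by (auto dest: rmodule_imp_left_module)

context RG_action
begin

lemma act_module_endo: "x \<in> carrier G \<Longrightarrow> module_endo R A (\<lambda>a. act a x)"
  unfolding module_endo_def by (simp add: act_closed act_add act_smult)

lemma act_act_inv:
  assumes "x \<in> carrier G" and "a \<in> carrier A"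
  shows "act (act a x) (inv\<^bsub>G\<^esub> x) = a" and "act (act a (inv\<^bsub>G\<^esub> x)) x = a"
  using assms by (simp_all add: act_mult act_one)

lemma submodule_centr_mod: "x \<in> carrier G \<Longrightarrow> submodule (centr_mod A act x) R A"
  unfolding centr_mod_def by (rule A.submodule_fixed_points[OF act_module_endo])

lemma centr_mod_one: "centr_mod A act \<one>\<^bsub>G\<^esub> = carrier A"
  unfolding centr_mod_def by (auto simp: act_one)

lemma centr_mod_mult:
  "\<lbrakk>x \<in> carrier G; y \<in> carrier G\<rbrakk> \<Longrightarrow> centr_mod A act x \<inter> centr_mod A act y \<subseteq> centr_mod A act (x \<otimes>\<^bsub>G\<^esub> y)"
  unfolding centr_mod_def by (auto simp: act_mult[symmetric])

lemma centr_mod_inv: "x \<in> carrier G \<Longrightarrow> centr_mod A act x \<subseteq> centr_mod A act (inv\<^bsub>G\<^esub> x)"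
  unfolding centr_mod_def using act_act_inv(1) by fastforce

lemma centr_mod_conj:
  assumes g: "g \<in> carrier G" and h: "h \<in> carrier G"
  shows "(\<lambda>a. act a (inv\<^bsub>G\<^esub> g)) ` centr_mod A act h \<subseteq> centr_mod A act (g \<otimes>\<^bsub>G\<^esub> h \<otimes>\<^bsub>G\<^esub> inv\<^bsub>G\<^esub> g)"
proof (rule image_subsetI)
  fix a assume "a \<in> centr_mod A act h"
  then have a: "a \<in> carrier A" "act a h = a" unfolding centr_mod_def by auto
  have "act (act a (inv\<^bsub>G\<^esub> g)) (g \<otimes>\<^bsub>G\<^esub> h \<otimes>\<^bsub>G\<^esub> inv\<^bsub>G\<^esub> g) = act a (h \<otimes>\<^bsub>G\<^esub> inv\<^bsub>G\<^esub> g)"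
    using g h a(1) by (simp add: act_mult G.m_assoc[symmetric])
  also have "\<dots> = act a (inv\<^bsub>G\<^esub> g)"
    using g h a by (simp add: act_mult[symmetric])
  finally show "act a (inv\<^bsub>G\<^esub> g) \<in> centr_mod A act (g \<otimes>\<^bsub>G\<^esub> h \<otimes>\<^bsub>G\<^esub> inv\<^bsub>G\<^esub> g)"
    unfolding centr_mod_def using g a(1) by (simp add: act_closed)
qed

lemma Coc_mmx_iff:
  "x \<in> Coc_mmx R G A act \<longleftrightarrow> x \<in> carrier G \<and> minimax_series R A (centr_mod A act x) (carrier A)"
  unfolding Coc_mmx_def using A.minimax_quotient_iff[OF submodule_centr_mod] by blast

lemma Coc_mmxI:
  assumes "x \<in> carrier G" and "minimax_series R A D (carrier A)" and "D \<subseteq> centr_mod A act x"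
  shows "x \<in> Coc_mmx R G A act"
  using assms A.minimax_series_carrier_mono[OF _ _ submodule_centr_mod] Coc_mmx_iff by blast

lemma Coc_mmx_one: "\<one>\<^bsub>G\<^esub> \<in> Coc_mmx R G A act"
  by (rule Coc_mmxI[OF G.one_closed minimax_series_refl[OF A.submodule_carrier]])
    (simp add: centr_mod_one)

lemma Coc_mmx_inv:
  assumes "x \<in> Coc_mmx R G A act"
  shows "inv\<^bsub>G\<^esub> x \<in> Coc_mmx R G A act"
proof -
  have x: "x \<in> carrier G" "minimax_series R A (centr_mod A act x) (carrier A)"
    using assms Coc_mmx_iff by auto
  show ?thesis by (rule Coc_mmxI[OF G.inv_closed[OF x(1)] x(2) centr_mod_inv[OF x(1)]])
qed

lemma Coc_mmx_mult:
  assumes "x \<in> Coc_mmx R G A act" and "y \<in> Coc_mmx R G A act"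
  shows "x \<otimes>\<^bsub>G\<^esub> y \<in> Coc_mmx R G A act"
proof -
  have x: "x \<in> carrier G" "minimax_series R A (centr_mod A act x) (carrier A)"
    and y: "y \<in> carrier G" "minimax_series R A (centr_mod A act y) (carrier A)"
    using assms Coc_mmx_iff by auto
  show ?thesis
    by (rule Coc_mmxI[OF G.m_closed[OF x(1) y(1)] A.minimax_series_carrier_Int[OF x(2) y(2)]
          centr_mod_mult[OF x(1) y(1)]])
qed

lemma Coc_mmx_conj:
  assumes g: "g \<in> carrier G" and "h \<in> Coc_mmx R G A act"
  shows "g \<otimes>\<^bsub>G\<^esub> h \<otimes>\<^bsub>G\<^esub> inv\<^bsub>G\<^esub> g \<in> Coc_mmx R G A act"
proof -
  have h: "h \<in> carrier G" "minimax_series R A (centr_mod A act h) (carrier A)"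
    using assms(2) Coc_mmx_iff by auto
  have image: "minimax_series R A ((\<lambda>a. act a (inv\<^bsub>G\<^esub> g)) ` centr_mod A act h) (carrier A)"
    by (rule A.minimax_series_carrier_image[OF h(2) act_module_endo[OF G.inv_closed[OF g]]
          act_module_endo[OF g] act_act_inv(2)[OF g] act_act_inv(1)[OF g]])
  show ?thesis
    by (rule Coc_mmxI[OF _ image centr_mod_conj[OF g h(1)]]) (simp add: g h(1))
qed

lemma Coc_mmx_normal: "Coc_mmx R G A act \<lhd> G"
proof -
  have "subgroup (Coc_mmx R G A act) G"
    by (rule G.subgroupI) (use Coc_mmx_iff Coc_mmx_one Coc_mmx_inv Coc_mmx_mult in auto)
  then show ?thesis
    using Coc_mmx_conj by (simp add: G.normal_inv_iff)
qed

end

theorem corollary2p4: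
  assumes "ring R" and "group G" and "RG_module R G A act"
  shows "Coc_mmx R G A act \<lhd> G"
proof -
  interpret RG_action R A G act
    using assms(3) by (rule RG_module_imp_RG_action)
  show ?thesis by (rule Coc_mmx_normal)
qed

end
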